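(* For every $p\ge1$ and $C>0$, the map $d_{\mathbb G,A}$ is a pseudometric on $\mathbb G$ (it is well defined on equality classes, $d_{\mathbb G,A}(G,G)=0$, it is symmetric and satisfies the triangle inequality). If $d_{\mathcal X}$ and $d_{\mathcal Y}$ are metrics, then $d_{\mathbb G,A}$ is a metric on $\mathbb G$.
   Context: Let $(\mathcal X,d_{\mathcal X})$ and $(\mathcal Y,d_{\mathcal Y})$ be pseudometric spaces (symmetric, satisfying the triangle inequality, $d(z,z)=0$), with a distinguished element $y_0\in\mathcal Y$ meaning "no edge". For $n\in\mathbb N_0$ write $[n]=\{1,\dots,n\}$ ($[0]=\emptyset$) and $S_n$ for the set of permutations of $[n]$. An attributed simple graph is a triple $([n],v,e)$ with $v:[n]\to\mathcal X$ and $e:[n]^2\to\mathcal Y$ symmetric ($e(i,i')=e(i',i)$) with $e(i,i)=y_0$ for all $i$; write $v_i=v(i)$, $e_{ii'}=e(i,i')$. Two graphs $([n],v,e)$, $([n],w,f)$ are regarded as equal if there is $\pi\in S_n$ with $v_i=w_{\pi(i)}$ and $e_{ii'}=f_{\pi(i)\pi(i')}$ for all $i,i'\in[n]$; $\mathbb G$ denotes the set of such graphs. GTT distance: for $p\ge1$, $C>0$ and $([m],v,e),([n],w,f)\in\mathbb G$ with $m\le n$, $$d_{\mathbb G,A}(([m],v,e),([n],w,f))=\min_{I\subset[m],\,\pi\in S_n}\Big[(m+n-2|I|)C^p+\sum_{i\in I}d_{\mathcal X}(v_i,w_{\pi(i)})^p+\tfrac12\sum_{(i,i')\in I^2}d_{\mathcal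 Y}(e_{ii'},f_{\pi(i)\pi(i')})^p+\tfrac12\sum_{(i,i')\in[m]^2\setminus I^2}d_{\mathcal Y}(e_{ii'},y_0)^p+\tfrac12\sum_{(j,j')\in[n]^2\setminus\pi(I)^2}d_{\mathcal Y}(y_0,f_{jj'})^p\Big]^{1/p},$$ and for $m>n$ it is defined by swapping the two arguments. *)

theory Defs
  imports Complex_Main "HOL-Combinatorics.Permutations"
begin

definition pseudometric :: "('a \<Rightarrow> 'a \<Rightarrow> real) \<Rightarrow> bool" where
  "pseudometric d \<longleftrightarrow> (\<forall>z. d z z = 0) \<and> (\<forall>x y. d x y = d y x)
     \<and> (\<forall>x y z. d x z \<le> d x y + d y z)"

definition is_metric :: "('a \<Rightarrow> 'a \<Rightarrow> real) \<Rightarrow> bool" where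
  "is_metric d \<longleftrightarrow> pseudometric d \<and> (\<forall>x y. d x y = 0 \<longrightarrow> x = y)"

text \<open>An attributed graph ([n], v, e) is represented by the triple (n, v, e);
  only the values of v on {1..n} and of e on {1..n}^2 matter.\<close>
type_synonym ('x, 'y) agraph = "nat \<times> (nat \<Rightarrow> 'x) \<times> (nat \<Rightarrow> nat \<Rightarrow> 'y)"

definition is_agraph :: "'y \<Rightarrow> ('x, 'y) agraph \<Rightarrow> bool" where
  "is_agraph y0 G \<longleftrightarrow> (case G of (n, v, e) \<Rightarrow>
     (\<forall>i\<in>{1..n}. \<forall>i'\<in>{1..n}. e i i' = e i' i) \<and> (\<forall>i\<in>{1..n}. e i i = y0))"

definition graph_eq :: "('x, 'y) agraph \<Rightarrow> ('x, 'y) agraph \<Rightarrow> bool" where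
  "graph_eq G H \<longleftrightarrow> (case G of (m, v, e) \<Rightarrow> case H of (n, w, f) \<Rightarrow>
     m = n \<and> (\<exists>\<pi>. \<pi> permutes {1..n} \<and>
        (\<forall>i\<in>{1..n}. v i = w (\<pi> i)) \<and>
        (\<forall>i\<in>{1..n}. \<forall>i'\<in>{1..n}. e i i' = f (\<pi> i) (\<pi> i'))))"

definition gtt_cost ::
  "real \<Rightarrow> real \<Rightarrow> ('x \<Rightarrow> 'x \<Rightarrow> real) \<Rightarrow> ('y \<Rightarrow> 'y \<Rightarrow> real) \<Rightarrow> 'y \<Rightarrow>
   ('x, 'y) agraph \<Rightarrow> ('x, 'y) agraph \<Rightarrow> nat set \<Rightarrow> (nat \<Rightarrow> nat) \<Rightarrow> real" where
  "gtt_cost p C dX dY y0 G H I \<pi> = (case G of (m, v, e) \<Rightarrow> case H of (n, w, f) \<Rightarrow>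
      (real m + real n - 2 * real (card I)) * C powr p
    + (\<Sum>i\<in>I. dX (v i) (w (\<pi> i)) powr p)
    + 1/2 * (\<Sum>(i, i')\<in>I \<times> I. dY (e i i') (f (\<pi> i) (\<pi> i')) powr p)
    + 1/2 * (\<Sum>(i, i')\<in>({1..m} \<times> {1..m}) - I \<times> I. dY (e i i') y0 powr p)
    + 1/2 * (\<Sum>(j, j')\<in>({1..n} \<times> {1..n}) - (\<pi> ` I) \<times> (\<pi> ` I). dY y0 (f j j') powr p))"

definition gtt_dist_le ::
  "real \<Rightarrow> real \<Rightarrow> ('x \<Rightarrow> 'x \<Rightarrow> real) \<Rightarrow> ('y \<Rightarrow> 'y \<Rightarrow> real) \<Rightarrow> 'y \<Rightarrow>
   ('x, 'y) agraph \<Rightarrow> ('x, 'y) agraph \<Rightarrow> real" where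
  "gtt_dist_le p C dX dY y0 G H =
     (Min {gtt_cost p C dX dY y0 G H I \<pi> | I \<pi>. I \<subseteq> {1..fst G} \<and> \<pi> permutes {1..fst H}})
       powr (1 / p)"

definition gtt_dist ::
  "real \<Rightarrow> real \<Rightarrow> ('x \<Rightarrow> 'x \<Rightarrow> real) \<Rightarrow> ('y \<Rightarrow> 'y \<Rightarrow> real) \<Rightarrow> 'y \<Rightarrow>
   ('x, 'y) agraph \<Rightarrow> ('x, 'y) agraph \<Rightarrow> real" where
  "gtt_dist p C dX dY y0 G H =
     (if fst G \<le> fst H then gtt_dist_le p C dX dY y0 G H else gtt_dist_le p C dX dY y0 H G)"

end

(*
  Both graphs are embedded into a common vertex set {1..N} by padding them with blank vertices
  (no attribute) and blank edges y0. A GTT matching then becomes a permutation \<sigma> of {1..N}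
  together with the set J of vertices whose image is a genuine substitution; every other vertex
  is deleted and its image inserted. The cost is a sum of p-th powers of distances, one term per
  vertex and per ordered pair of vertices. Inverting \<sigma> gives symmetry, composing two such
  permutations gives a matching for the triangle inequality, and in each term the triangle
  inequality of d_X or d_Y survives the p-th roots by Minkowski's inequality. Relabelling a
  graph only reindexes the sums.
*)

theory Submission
  imports Defs "HOL-Analysis.Convex"
begin

section \<open>Minkowski's inequality and \<open>p\<close>-th roots\<close>

lemma powr_convex_combination_le:
  fixes a b t p :: real
  assumes "0 \<le> a" "0 \<le> b" "0 \<le> t" "t \<le> 1" "1 \<le> p"
  shows "((1 - t) * a + t * b) powr p \<le> (1 - t) * a powr p + t * b powr p"
proof -
  have scaled: "(s * c) powr p \<le> s * c powr p" if "0 \<le> s" "s \<le> 1" "0 \<le> c" for s c :: real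
  proof -
    have "s powr p \<le> s powr 1"
      using that assms by (intro powr_mono') auto
    then show ?thesis
      using that by (simp add: powr_mult mult_right_mono)
  qed
  consider "0 < a" "0 < b" | "a = 0" | "b = 0"
    using assms by linarith
  then show ?thesis
  proof cases
    case 1
    then show ?thesis
      using convex_onD[OF powr_convex[OF \<open>1 \<le> p\<close>], of t a b] assms by simp
  qed (use scaled[of t b] scaled[of "1 - t" a] assms in simp_all)
qed

lemma minkowski_sum_powr:
  fixes x y :: "'i \<Rightarrow> real"
  assumes "finite A" "1 \<le> p" "\<And>i. i \<in> A \<Longrightarrow> 0 \<le> x i" "\<And>i. i \<in> A \<Longrightarrow> 0 \<le> y i"
  shows "(\<Sum>i\<in>A. (x i + y i) powr p) powr (1/p)
           \<le> (\<Sum>i\<in>A. x i powr p) powr (1/p) + (\<Sum>i\<in>A. y i powr p) powr (1/p)"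
proof -
  define X where "X = (\<Sum>i\<in>A. x i powr p) powr (1/p)"
  define Y where "Y = (\<Sum>i\<in>A. y i powr p) powr (1/p)"
  have X_powr: "X powr p = (\<Sum>i\<in>A. x i powr p)" and Y_powr: "Y powr p = (\<Sum>i\<in>A. y i powr p)"
    using assms by (simp_all add: X_def Y_def powr_powr sum_nonneg)
  show ?thesis
  proof (cases "X = 0 \<or> Y = 0")
    case True
    then have "(\<forall>i\<in>A. x i = 0) \<or> (\<forall>i\<in>A. y i = 0)"
      using assms by (auto simp: X_def Y_def sum_nonneg_eq_0_iff)
    then show ?thesis
      using assms by (auto simp: X_def Y_def)
  next
    case False
    then have "0 < X" "0 < Y"
      by (auto simp: X_def Y_def)
    define t where "t = Y / (X + Y)"
    have t: "0 \<le> t" "t \<le> 1" "1 - t = X / (X + Y)"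
      using \<open>0 < X\<close> \<open>0 < Y\<close> by (auto simp: t_def field_simps)
    \<comment> \<open>\<open>(x + y)/(X + Y)\<close> is a convex combination of \<open>x/X\<close> and \<open>y/Y\<close>\<close>
    have "(\<Sum>i\<in>A. ((x i + y i) / (X + Y)) powr p)
        \<le> (\<Sum>i\<in>A. (1 - t) * (x i / X) powr p + t * (y i / Y) powr p)"
    proof (rule sum_mono)
      fix i assume "i \<in> A"
      have "(1 - t) * (x i / X) = x i / (X + Y)" "t * (y i / Y) = y i / (X + Y)"
        using \<open>0 < X\<close> \<open>0 < Y\<close> unfolding t(3) by (simp_all add: t_def)
      then have "(x i + y i) / (X + Y) = (1 - t) * (x i / X) + t * (y i / Y)"
        by (simp add: add_divide_distrib)
      then show "((x i + y i) / (X + Y)) powr p \<le> (1 - t) * (x i / X) powr p + t * (y i / Y) powr p"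
        using powr_convex_combination_le[of "x i / X" "y i / Y" t p] \<open>i \<in> A\<close> assms t
          \<open>0 < X\<close> \<open>0 < Y\<close> by simp
    qed
    also have "\<dots> = (1 - t) * ((\<Sum>i\<in>A. x i powr p) / X powr p) + t * ((\<Sum>i\<in>A. y i powr p) / Y powr p)"
      using assms \<open>0 < X\<close> \<open>0 < Y\<close>
      by (simp add: sum.distrib sum_distrib_left sum_divide_distrib powr_divide)
    also have "\<dots> = 1"
      using \<open>0 < X\<close> \<open>0 < Y\<close> by (simp add: X_powr[symmetric] Y_powr[symmetric])
    finally have "(\<Sum>i\<in>A. (x i + y i) powr p) \<le> (X + Y) powr p"
      using assms \<open>0 < X\<close> \<open>0 < Y\<close>
      by (simp add: powr_divide sum_divide_distrib[symmetric] divide_le_eq)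
    then have "(\<Sum>i\<in>A. (x i + y i) powr p) powr (1/p) \<le> ((X + Y) powr p) powr (1/p)"
      using assms by (intro powr_mono2) (auto intro: sum_nonneg)
    then show ?thesis
      using assms \<open>0 < X\<close> \<open>0 < Y\<close> by (simp add: powr_powr X_def Y_def)
  qed
qed

lemma root_sum_triangle:
  fixes X Y Z :: "'i \<Rightarrow> real"
  assumes "finite A" "1 \<le> p"
    and "\<And>i. i \<in> A \<Longrightarrow> 0 \<le> X i" "\<And>i. i \<in> A \<Longrightarrow> 0 \<le> Y i" "\<And>i. i \<in> A \<Longrightarrow> 0 \<le> Z i"
    and "\<And>i. i \<in> A \<Longrightarrow> Z i powr (1/p) \<le> X i powr (1/p) + Y i powr (1/p)"
  shows "(\<Sum>i\<in>A. Z i) powr (1/p) \<le> (\<Sum>i\<in>A. X i) powr (1/p) + (\<Sum>i\<in>A. Y i) powr (1/p)"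
proof -
  have "Z i \<le> (X i powr (1/p) + Y i powr (1/p)) powr p" if "i \<in> A" for i
  proof -
    have "Z i = (Z i powr (1/p)) powr p"
      using assms that by (simp add: powr_powr)
    also have "\<dots> \<le> (X i powr (1/p) + Y i powr (1/p)) powr p"
      using assms that by (intro powr_mono2) auto
    finally show ?thesis .
  qed
  then have "(\<Sum>i\<in>A. Z i) \<le> (\<Sum>i\<in>A. (X i powr (1/p) + Y i powr (1/p)) powr p)"
    by (rule sum_mono)
  then have "(\<Sum>i\<in>A. Z i) powr (1/p) \<le> (\<Sum>i\<in>A. (X i powr (1/p) + Y i powr (1/p)) powr p) powr (1/p)"
    using assms by (intro powr_mono2 sum_nonneg) auto
  also have "\<dots> \<le> (\<Sum>i\<in>A. (X i powr (1/p)) powr p) powr (1/p) + (\<Sum>i\<in>A. (Y i powr (1/p)) powr p) powr (1/p)"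
    using assms by (intro minkowski_sum_powr) auto
  also have "\<dots> = (\<Sum>i\<in>A. X i) powr (1/p) + (\<Sum>i\<in>A. Y i) powr (1/p)"
    using assms by (simp add: powr_powr)
  finally show ?thesis .
qed

lemma root_add_triangle:
  fixes p :: real
  assumes "1 \<le> p" "0 \<le> X\<^sub>1" "0 \<le> X\<^sub>2" "0 \<le> Y\<^sub>1" "0 \<le> Y\<^sub>2" "0 \<le> Z\<^sub>1" "0 \<le> Z\<^sub>2"
    and "Z\<^sub>1 powr (1/p) \<le> X\<^sub>1 powr (1/p) + Y\<^sub>1 powr (1/p)"
    and "Z\<^sub>2 powr (1/p) \<le> X\<^sub>2 powr (1/p) + Y\<^sub>2 powr (1/p)"
  shows "(Z\<^sub>1 + Z\<^sub>2) powr (1/p) \<le> (X\<^sub>1 + X\<^sub>2) powr (1/p) + (Y\<^sub>1 + Y\<^sub>2) powr (1/p)"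
proof -
  have "(\<Sum>i\<in>UNIV. if i then Z\<^sub>1 else Z\<^sub>2) powr (1/p)
      \<le> (\<Sum>i\<in>UNIV. if i then X\<^sub>1 else X\<^sub>2) powr (1/p) + (\<Sum>i\<in>UNIV. if i then Y\<^sub>1 else Y\<^sub>2) powr (1/p)"
    by (rule root_sum_triangle) (use assms in auto)
  then show ?thesis
    by (simp add: UNIV_bool add.commute)
qed

lemma root_triangle_scale:
  fixes p :: real
  assumes "0 < p" "0 \<le> c" "0 \<le> X" "0 \<le> Y" "0 \<le> Z" "Z powr (1/p) \<le> X powr (1/p) + Y powr (1/p)"
  shows "(c * Z) powr (1/p) \<le> (c * X) powr (1/p) + (c * Y) powr (1/p)"
  using mult_left_mono[OF assms(6), of "c powr (1/p)"] assms
  by (simp add: powr_mult distrib_left)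

section \<open>Edit costs of a matching\<close>

definition edit_cost :: "real \<Rightarrow> ('a \<Rightarrow> 'a \<Rightarrow> real) \<Rightarrow> 'a \<Rightarrow> bool \<Rightarrow> 'a \<Rightarrow> 'a \<Rightarrow> real" where
  "edit_cost p d b matched x y =
     (if matched then d x y powr p else d x b powr p + d b y powr p)"

definition matching_cost ::
  "real \<Rightarrow> ('a \<Rightarrow> 'a \<Rightarrow> real) \<Rightarrow> 'a \<Rightarrow> 'i set \<Rightarrow> 'i set \<Rightarrow> ('i \<Rightarrow> 'a) \<Rightarrow> ('i \<Rightarrow> 'a) \<Rightarrow> real" where
  "matching_cost p d b A M X Y = (\<Sum>i\<in>A. edit_cost p d b (i \<in> M) (X i) (Y i))"

lemma edit_cost_nonneg: "0 \<le> edit_cost p d b matched x y"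
  by (simp add: edit_cost_def)

lemma matching_cost_nonneg: "0 \<le> matching_cost p d b A M X Y"
  unfolding matching_cost_def by (intro sum_nonneg edit_cost_nonneg)

lemma edit_cost_root_triangle:
  fixes d :: "'a \<Rightarrow> 'a \<Rightarrow> real"
  assumes "1 \<le> p" and nonneg: "\<And>u w. 0 \<le> d u w"
    and triangle: "\<alpha> \<Longrightarrow> \<beta> \<Longrightarrow> d x z \<le> d x y + d y z"
    and triangle_blank: "d x b \<le> d x y + d y b" "d b z \<le> d b y + d y z"
  shows "edit_cost p d b (\<alpha> \<and> \<beta>) x z powr (1/p)
           \<le> edit_cost p d b \<alpha> x y powr (1/p) + edit_cost p d b \<beta> y z powr (1/p)"
proof -
  have root: "(t powr p) powr (1/p) = t" if "0 \<le> t" for t :: real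
    using that \<open>1 \<le> p\<close> by (simp add: powr_powr)
  have minkowski2: "(Z\<^sub>1 powr p + Z\<^sub>2 powr p) powr (1/p) \<le> (X\<^sub>1 powr p + X\<^sub>2 powr p) powr (1/p) + (Y\<^sub>1 powr p + Y\<^sub>2 powr p) powr (1/p)"
    if "Z\<^sub>1 \<le> X\<^sub>1 + Y\<^sub>1" "Z\<^sub>2 \<le> X\<^sub>2 + Y\<^sub>2" "0 \<le> X\<^sub>1" "0 \<le> X\<^sub>2" "0 \<le> Y\<^sub>1" "0 \<le> Y\<^sub>2" "0 \<le> Z\<^sub>1" "0 \<le> Z\<^sub>2"
    for X\<^sub>1 X\<^sub>2 Y\<^sub>1 Y\<^sub>2 Z\<^sub>1 Z\<^sub>2 :: real
    using that \<open>1 \<le> p\<close> by (intro root_add_triangle) (simp_all add: root)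
  consider (both) "\<alpha>" "\<beta>" | (first) "\<alpha>" "\<not> \<beta>" | (second) "\<not> \<alpha>" "\<beta>" | (neither) "\<not> \<alpha>" "\<not> \<beta>"
    by blast
  then show ?thesis
  proof cases
    case both
    then show ?thesis
      using triangle by (simp add: edit_cost_def root nonneg)
  next
    case first
    then show ?thesis
      using minkowski2[of "d x b" "d x y" "d y b" "d b z" 0 "d b z"] triangle_blank
      by (simp add: edit_cost_def nonneg)
  next
    case second
    then show ?thesis
      using minkowski2[of "d x b" "d x b" 0 "d b z" "d b y" "d y z"] triangle_blank
      by (simp add: edit_cost_def nonneg)
  next
    case neither
    then show ?thesis
      using minkowski2[of "d x b" "d x b" "d y b" "d b z" "d b y" "d b z"] nonneg
      by (simp add: edit_cost_def add_increasing2 add_increasing)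
  qed
qed

lemma matching_cost_root_triangle:
  fixes d :: "'a \<Rightarrow> 'a \<Rightarrow> real"
  assumes "finite A" "1 \<le> p" "\<And>u w. 0 \<le> d u w"
    and "\<And>i. i \<in> A \<Longrightarrow> i \<in> M\<^sub>1 \<Longrightarrow> i \<in> M\<^sub>2 \<Longrightarrow> d (X i) (Z i) \<le> d (X i) (Y i) + d (Y i) (Z i)"
    and "\<And>u w. d u b \<le> d u w + d w b" "\<And>u w. d b u \<le> d b w + d w u"
  shows "matching_cost p d b A (M\<^sub>1 \<inter> M\<^sub>2) X Z powr (1/p)
           \<le> matching_cost p d b A M\<^sub>1 X Y powr (1/p) + matching_cost p d b A M\<^sub>2 Y Z powr (1/p)"
  unfolding matching_cost_def Int_iff
  using assms by (intro root_sum_triangle edit_cost_root_triangle edit_cost_nonneg) auto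

lemma matching_cost_reindex:
  assumes "bij_betw h A A"
  shows "matching_cost p d b A M X Y = matching_cost p d b A {i \<in> A. h i \<in> M} (X \<circ> h) (Y \<circ> h)"
  unfolding matching_cost_def
  using sum.reindex_bij_betw[OF assms, of "\<lambda>i. edit_cost p d b (i \<in> M) (X i) (Y i)"]
  by (auto intro: sum.cong)

lemma matching_cost_reindex_image:
  assumes "bij_betw h A A" "M \<subseteq> A"
  shows "matching_cost p d b A (h ` M) X Y = matching_cost p d b A M (X \<circ> h) (Y \<circ> h)"
proof -
  have "{i \<in> A. h i \<in> h ` M} = M"
    using assms bij_betw_imp_inj_on[OF assms(1)] by (auto simp: inj_on_def)
  then show ?thesis
    using matching_cost_reindex[OF assms(1)] by metis
qed

lemma matching_cost_swap:
  assumes "\<And>u w. d u w = d w u"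
  shows "matching_cost p d b A M X Y = matching_cost p d b A M Y X"
  unfolding matching_cost_def edit_cost_def by (intro sum.cong refl) (metis assms add.commute)

lemma matching_cost_self_eq_0:
  assumes "0 < p" "\<And>u. d u u = 0" "\<And>i. i \<in> A - M \<Longrightarrow> X i = b"
  shows "matching_cost p d b A M X X = 0"
  unfolding matching_cost_def edit_cost_def using assms by (intro sum.neutral) auto

lemma matching_cost_eq_0_imp:
  assumes "matching_cost p d b A M X Y = 0" "finite A" "i \<in> A"
  shows "if i \<in> M then d (X i) (Y i) = 0 else d (X i) b = 0 \<and> d b (Y i) = 0"
proof -
  have "edit_cost p d b (i \<in> M) (X i) (Y i) = 0"
    using assms sum_nonneg_eq_0_iff[of A "\<lambda>i. edit_cost p d b (i \<in> M) (X i) (Y i)"]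
    by (simp add: matching_cost_def edit_cost_nonneg)
  then show ?thesis
    by (auto simp: edit_cost_def add_nonneg_eq_0_iff)
qed

lemma matching_cost_split:
  assumes "finite A" "M \<subseteq> A"
  shows "matching_cost p d b A M X Y
       = (\<Sum>i\<in>M. d (X i) (Y i) powr p) + (\<Sum>i\<in>A - M. d (X i) b powr p) + (\<Sum>i\<in>A - M. d b (Y i) powr p)"
proof -
  have "matching_cost p d b A M X Y
      = (\<Sum>i\<in>A - M. edit_cost p d b (i \<in> M) (X i) (Y i)) + (\<Sum>i\<in>M. edit_cost p d b (i \<in> M) (X i) (Y i))"
    unfolding matching_cost_def by (rule sum.subset_diff[OF assms(2,1)])
  then show ?thesis
    by (simp add: edit_cost_def sum.distrib)
qed

lemma sum_Diff_reindex_shrink: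
  assumes "bij_betw h A A" "B \<subseteq> A" "A' \<subseteq> A" "finite A" "\<And>j. j \<in> A - A' \<Longrightarrow> g j = 0"
  shows "(\<Sum>i\<in>A - B. g (h i)) = (\<Sum>j\<in>A' - h ` B. g j)"
proof -
  have "inj_on h B"
    using assms(1,2) bij_betw_imp_inj_on inj_on_subset by blast
  then have "bij_betw h B (h ` B)"
    by (rule inj_on_imp_bij_betw)
  moreover have "h ` B \<subseteq> A"
    using assms(1,2) bij_betw_imp_surj_on by blast
  ultimately have "bij_betw h (A - B) (A - h ` B)"
    using assms(1,2) by (intro bij_betw_DiffI)
  then have "(\<Sum>i\<in>A - B. g (h i)) = (\<Sum>j\<in>A - h ` B. g j)"
    by (rule sum.reindex_bij_betw)
  also have "\<dots> = (\<Sum>j\<in>A' - h ` B. g j)"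
    using assms by (intro sum.mono_neutral_right) auto
  finally show ?thesis .
qed

lemma bij_betw_map_prod_permutes:
  "\<sigma> permutes A \<Longrightarrow> bij_betw (map_prod \<sigma> \<sigma>) (A \<times> A) (A \<times> A)"
  using permutes_imp_bij by (blast intro: bij_betw_map_prod)

lemma permutes_extend:
  assumes "finite S" "A \<subseteq> S" "inj_on f A" "f ` A \<subseteq> S"
  obtains \<pi> where "\<pi> permutes S" "\<And>x. x \<in> A \<Longrightarrow> \<pi> x = f x"
proof -
  have "card (S - A) = card (S - f ` A)"
    using assms by (simp add: card_Diff_subset card_image finite_subset)
  then obtain g where g: "bij_betw g (S - A) (S - f ` A)"
    using assms by (metis finite_Diff finite_same_card_bij)
  define \<pi> where "\<pi> x = (if x \<in> A then f x else if x \<in> S then g x else x)" for x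
  have "bij_betw \<pi> (A \<union> (S - A)) (f ` A \<union> (S - f ` A))"
  proof (rule bij_betw_combine)
    show "bij_betw \<pi> A (f ` A)"
      using assms(3) by (simp add: \<pi>_def bij_betw_def inj_on_def)
    show "bij_betw \<pi> (S - A) (S - f ` A)"
      using g by (rule bij_betw_cong[THEN iffD1, rotated]) (auto simp: \<pi>_def)
  qed auto
  moreover have "A \<union> (S - A) = S" "f ` A \<union> (S - f ` A) = S"
    using assms by auto
  ultimately have "\<pi> permutes S"
    by (intro bij_imp_permutes) (auto simp: \<pi>_def)
  then show thesis
    by (rule that) (simp add: \<pi>_def)
qed

section \<open>Padded graphs\<close>

lemma pseudometric_nonneg:
  assumes "pseudometric d"
  shows "0 \<le> d x y"
proof -
  have "d x x \<le> d x y + d y x" "d x x = 0" "d y x = d x y"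
    using assms unfolding pseudometric_def by blast+
  then show ?thesis
    by linarith
qed

(* None is the blank vertex, at distance c from every genuine one. This is not a pseudometric
   (d a b may exceed 2 c), but the triangle inequality holds through a genuine middle point and
   towards the blank, which is all that edit_cost_root_triangle needs. *)
fun option_dist :: "real \<Rightarrow> ('a \<Rightarrow> 'a \<Rightarrow> real) \<Rightarrow> 'a option \<Rightarrow> 'a option \<Rightarrow> real" where
  "option_dist c d (Some a) (Some b) = d a b"
| "option_dist c d None None = 0"
| "option_dist c d _ _ = c"

context
  fixes c :: real and d :: "'a \<Rightarrow> 'a \<Rightarrow> real"
  assumes c: "0 \<le> c" and d: "pseudometric d"
begin

lemma option_dist_nonneg: "0 \<le> option_dist c d x y"
  using c pseudometric_nonneg[OF d] by (cases x; cases y) auto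

lemma option_dist_commute: "option_dist c d x y = option_dist c d y x"
  using d unfolding pseudometric_def by (cases x; cases y) auto

lemma option_dist_self: "option_dist c d x x = 0"
  using d unfolding pseudometric_def by (cases x) auto

lemma option_dist_triangle:
  assumes "y \<noteq> None"
  shows "option_dist c d x z \<le> option_dist c d x y + option_dist c d y z"
  using assms c d pseudometric_nonneg[OF d] unfolding pseudometric_def
  by (cases x; cases y; cases z) (auto simp: add_increasing add_increasing2)

lemma option_dist_triangle_None:
  "option_dist c d x None \<le> option_dist c d x y + option_dist c d y None"
  "option_dist c d None z \<le> option_dist c d None y + option_dist c d y z"
  using c pseudometric_nonneg[OF d] by (cases x; cases y; cases z; simp)+

end

definition pad_vertex :: "nat \<Rightarrow> (nat \<Rightarrow> 'x) \<Rightarrow> nat \<Rightarrow> 'x option" where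
  "pad_vertex m v i = (if i \<in> {1..m} then Some (v i) else None)"

fun pad_edge :: "'y \<Rightarrow> nat \<Rightarrow> (nat \<Rightarrow> nat \<Rightarrow> 'y) \<Rightarrow> nat \<times> nat \<Rightarrow> 'y" where
  "pad_edge y0 m e (i, i') = (if i \<in> {1..m} \<and> i' \<in> {1..m} then e i i' else y0)"

lemma graph_eq_padE:
  assumes "graph_eq (m, v, e) (n, w, f)"
  obtains \<rho> where "m = n" "\<rho> permutes {1..m}"
    "pad_vertex m v = pad_vertex n w \<circ> \<rho>" "pad_edge y0 m e = pad_edge y0 n f \<circ> map_prod \<rho> \<rho>"
proof -
  obtain \<rho> where "m = n" and \<rho>: "\<rho> permutes {1..m}" and "\<forall>i\<in>{1..m}. v i = w (\<rho> i)"
    and "\<forall>i\<in>{1..m}. \<forall>i'\<in>{1..m}. e i i' = f (\<rho> i) (\<rho> i')"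
    using assms unfolding graph_eq_def by auto
  moreover have "\<rho> i \<in> {1..m} \<longleftrightarrow> i \<in> {1..m}" for i
    using permutes_in_image[OF \<rho>] .
  ultimately show thesis
    by (intro that) (auto simp: fun_eq_iff pad_vertex_def simp del: atLeastAtMost_iff)
qed

lemma graph_eq_imp_fst_eq: "graph_eq G G' \<Longrightarrow> fst G = fst G'"
  unfolding graph_eq_def by (auto split: prod.splits)

definition padded_matching :: "nat \<Rightarrow> nat \<Rightarrow> nat \<Rightarrow> (nat \<Rightarrow> nat) \<Rightarrow> nat set \<Rightarrow> bool" where
  "padded_matching N m n \<sigma> J \<longleftrightarrow> \<sigma> permutes {1..N} \<and> J \<subseteq> {1..m} \<and> \<sigma> ` J \<subseteq> {1..n}"

section \<open>The GTT distance through padded matchings\<close>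

locale gtt_space =
  fixes p C :: real and dX :: "'x \<Rightarrow> 'x \<Rightarrow> real" and dY :: "'y \<Rightarrow> 'y \<Rightarrow> real" and y0 :: 'y
  assumes p_ge_1: "1 \<le> p" and C_pos: "0 < C"
    and pseudometric_dX: "pseudometric dX" and pseudometric_dY: "pseudometric dY"
begin

lemma dY_refl: "dY y y = 0"
  and dY_commute: "dY y y' = dY y' y"
  and dY_triangle: "dY y y'' \<le> dY y y' + dY y' y''"
  using pseudometric_dY unfolding pseudometric_def by blast+

lemma dY_nonneg: "0 \<le> dY y y'"
  using pseudometric_nonneg[OF pseudometric_dY] .

lemma vertex_dist_nonneg: "0 \<le> option_dist C dX x x'"
  and vertex_dist_commute: "option_dist C dX x x' = option_dist C dX x' x"
  and vertex_dist_self: "option_dist C dX x x = 0"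
  and vertex_dist_triangle: "x' \<noteq> None \<Longrightarrow> option_dist C dX x x'' \<le> option_dist C dX x x' + option_dist C dX x' x''"
  and vertex_dist_triangle_None:
    "option_dist C dX x None \<le> option_dist C dX x x' + option_dist C dX x' None"
    "option_dist C dX None x'' \<le> option_dist C dX None x' + option_dist C dX x' x''"
  using C_pos pseudometric_dX
  by (auto intro: option_dist_nonneg option_dist_commute option_dist_self option_dist_triangle
      option_dist_triangle_None)

definition vertex_cost :: "nat \<Rightarrow> nat \<Rightarrow> (nat \<Rightarrow> 'x) \<Rightarrow> nat \<Rightarrow> (nat \<Rightarrow> 'x) \<Rightarrow> (nat \<Rightarrow> nat) \<Rightarrow> nat set \<Rightarrow> real"
  where "vertex_cost N m v n w \<sigma> J =
    matching_cost p (option_dist C dX) None {1..N} J (pad_vertex m v) (pad_vertex n w \<circ> \<sigma>)"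

definition edge_cost ::
  "nat \<Rightarrow> nat \<Rightarrow> (nat \<Rightarrow> nat \<Rightarrow> 'y) \<Rightarrow> nat \<Rightarrow> (nat \<Rightarrow> nat \<Rightarrow> 'y) \<Rightarrow> (nat \<Rightarrow> nat) \<Rightarrow> nat set \<Rightarrow> real"
  where "edge_cost N m e n f \<sigma> J =
    matching_cost p dY y0 ({1..N} \<times> {1..N}) (J \<times> J) (pad_edge y0 m e) (pad_edge y0 n f \<circ> map_prod \<sigma> \<sigma>)"

fun padded_cost :: "nat \<Rightarrow> ('x, 'y) agraph \<Rightarrow> ('x, 'y) agraph \<Rightarrow> (nat \<Rightarrow> nat) \<Rightarrow> nat set \<Rightarrow> real" where
  "padded_cost N (m, v, e) (n, w, f) \<sigma> J = vertex_cost N m v n w \<sigma> J + 1/2 * edge_cost N m e n f \<sigma> J"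

definition padded_costs :: "nat \<Rightarrow> ('x, 'y) agraph \<Rightarrow> ('x, 'y) agraph \<Rightarrow> real set" where
  "padded_costs N G H =
     {padded_cost N G H \<sigma> J | \<sigma> J. padded_matching N (fst G) (fst H) \<sigma> J}"

lemma vertex_cost_eq_gtt:
  assumes "padded_matching N m n \<sigma> J" "m \<le> N" "n \<le> N" "\<And>i. i \<in> J \<Longrightarrow> \<pi> i = \<sigma> i"
  shows "vertex_cost N m v n w \<sigma> J
       = (real m + real n - 2 * real (card J)) * C powr p + (\<Sum>i\<in>J. dX (v i) (w (\<pi> i)) powr p)"
proof -
  have \<sigma>: "\<sigma> permutes {1..N}" and J: "J \<subseteq> {1..m}" "\<sigma> ` J \<subseteq> {1..n}"
    using assms(1) by (auto simp: padded_matching_def)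
  have JN: "J \<subseteq> {1..N}"
    using J assms(2) by auto
  have "card (\<sigma> ` J) = card J"
    using permutes_inj[OF \<sigma>] by (simp add: card_image inj_on_subset)
  then have card: "card ({1..m} - J) = m - card J" "card ({1..n} - \<sigma> ` J) = n - card J"
    "card J \<le> m" "card J \<le> n"
    using J by (auto simp: card_Diff_subset finite_subset dest: card_mono[rotated])
  have "0 < p"
    using p_ge_1 by simp
  have "(\<Sum>i\<in>J. option_dist C dX (pad_vertex m v i) (pad_vertex n w (\<sigma> i)) powr p)
      = (\<Sum>i\<in>J. dX (v i) (w (\<pi> i)) powr p)"
    using J assms(4) by (intro sum.cong) (auto simp: pad_vertex_def)
  moreover have "(\<Sum>i\<in>{1..N} - J. option_dist C dX (pad_vertex m v (id i)) None powr p)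
      = (\<Sum>i\<in>{1..m} - id ` J. option_dist C dX (pad_vertex m v i) None powr p)"
    using JN assms(2) \<open>0 < p\<close>
    by (intro sum_Diff_reindex_shrink[OF bij_betw_id]) (auto simp: pad_vertex_def)
  moreover have "(\<Sum>i\<in>{1..N} - J. option_dist C dX None (pad_vertex n w (\<sigma> i)) powr p)
      = (\<Sum>i\<in>{1..n} - \<sigma> ` J. option_dist C dX None (pad_vertex n w i) powr p)"
    using permutes_imp_bij[OF \<sigma>] JN assms(3) \<open>0 < p\<close>
    by (intro sum_Diff_reindex_shrink) (auto simp: pad_vertex_def)
  ultimately show ?thesis
    using JN card by (simp add: vertex_cost_def matching_cost_split pad_vertex_def of_nat_diff algebra_simps)
qed

lemma edge_cost_eq_gtt:
  assumes "padded_matching N m n \<sigma> J" "m \<le> N" "n \<le> N" "\<And>i. i \<in> J \<Longrightarrow> \<pi> i = \<sigma> i"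
  shows "edge_cost N m e n f \<sigma> J
       = (\<Sum>(i, i')\<in>J \<times> J. dY (e i i') (f (\<pi> i) (\<pi> i')) powr p)
         + (\<Sum>(i, i')\<in>{1..m} \<times> {1..m} - J \<times> J. dY (e i i') y0 powr p)
         + (\<Sum>(j, j')\<in>{1..n} \<times> {1..n} - \<pi> ` J \<times> \<pi> ` J. dY y0 (f j j') powr p)"
proof -
  have \<sigma>: "\<sigma> permutes {1..N}" and J: "J \<subseteq> {1..m}" "\<sigma> ` J \<subseteq> {1..n}"
    using assms(1) by (auto simp: padded_matching_def)
  have JN: "J \<subseteq> {1..N}"
    using J assms(2) by auto
  have "0 < p"
    using p_ge_1 by simp
  have "(\<Sum>q\<in>J \<times> J. dY (pad_edge y0 m e q) (pad_edge y0 n f (map_prod \<sigma> \<sigma> q)) powr p)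
      = (\<Sum>(i, i')\<in>J \<times> J. dY (e i i') (f (\<pi> i) (\<pi> i')) powr p)"
    using J assms(4) by (intro sum.cong) (auto simp: image_subset_iff subset_iff)
  moreover have "(\<Sum>q\<in>{1..N} \<times> {1..N} - J \<times> J. dY (pad_edge y0 m e (id q)) y0 powr p)
      = (\<Sum>q\<in>{1..m} \<times> {1..m} - id ` (J \<times> J). dY (pad_edge y0 m e q) y0 powr p)"
    using JN assms(2) \<open>0 < p\<close> dY_refl
    by (intro sum_Diff_reindex_shrink[OF bij_betw_id]) (auto split: if_splits)
  moreover have "(\<Sum>q\<in>{1..N} \<times> {1..N} - J \<times> J. dY y0 (pad_edge y0 n f (map_prod \<sigma> \<sigma> q)) powr p)
      = (\<Sum>q\<in>{1..n} \<times> {1..n} - map_prod \<sigma> \<sigma> ` (J \<times> J). dY y0 (pad_edge y0 n f q) powr p)"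
    using bij_betw_map_prod_permutes[OF \<sigma>] JN assms(3) \<open>0 < p\<close> dY_refl
    by (intro sum_Diff_reindex_shrink) (auto split: if_splits)
  moreover have "map_prod \<sigma> \<sigma> ` (J \<times> J) = \<pi> ` J \<times> \<pi> ` J"
    using assms(4) by (simp add: map_prod_surj_on)
  moreover have "(\<Sum>q\<in>{1..m} \<times> {1..m} - J \<times> J. dY (pad_edge y0 m e q) y0 powr p)
      = (\<Sum>(i, i')\<in>{1..m} \<times> {1..m} - J \<times> J. dY (e i i') y0 powr p)"
    by (intro sum.cong) auto
  moreover have "(\<Sum>q\<in>{1..n} \<times> {1..n} - \<pi> ` J \<times> \<pi> ` J. dY y0 (pad_edge y0 n f q) powr p)
      = (\<Sum>(j, j')\<in>{1..n} \<times> {1..n} - \<pi> ` J \<times> \<pi> ` J. dY y0 (f j j') powr p)"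
    by (intro sum.cong) auto
  moreover have "J \<times> J \<subseteq> {1..N} \<times> {1..N}"
    using JN by auto
  ultimately show ?thesis
    by (simp add: edge_cost_def matching_cost_split)
qed

lemma padded_cost_eq_gtt_cost:
  assumes "padded_matching N m n \<sigma> J" "m \<le> N" "n \<le> N" "\<And>i. i \<in> J \<Longrightarrow> \<pi> i = \<sigma> i"
  shows "padded_cost N (m, v, e) (n, w, f) \<sigma> J = gtt_cost p C dX dY y0 (m, v, e) (n, w, f) J \<pi>"
  by (simp add: gtt_cost_def vertex_cost_eq_gtt[OF assms] edge_cost_eq_gtt[OF assms] algebra_simps)

lemma padded_cost_swap:
  assumes "padded_matching N m n \<sigma> J" "m \<le> N"
  shows "padded_matching N n m (inv \<sigma>) (\<sigma> ` J)"
    and "padded_cost N (n, w, f) (m, v, e) (inv \<sigma>) (\<sigma> ` J) = padded_cost N (m, v, e) (n, w, f) \<sigma> J"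
proof -
  have \<sigma>: "\<sigma> permutes {1..N}" and J: "J \<subseteq> {1..m}" "\<sigma> ` J \<subseteq> {1..n}"
    using assms by (auto simp: padded_matching_def)
  show "padded_matching N n m (inv \<sigma>) (\<sigma> ` J)"
    using J permutes_inv[OF \<sigma>] by (auto simp: padded_matching_def permutes_inverses[OF \<sigma>])
  have JN: "J \<subseteq> {1..N}"
    using J(1) assms(2) by auto
  have inv_\<sigma>: "inv \<sigma> \<circ> \<sigma> = id" "map_prod (inv \<sigma>) (inv \<sigma>) \<circ> map_prod \<sigma> \<sigma> = id"
    using permutes_inv_o(2)[OF \<sigma>] by (metis map_prod.comp map_prod.id)+
  have "vertex_cost N n w m v (inv \<sigma>) (\<sigma> ` J)
      = matching_cost p (option_dist C dX) None {1..N} J (pad_vertex n w \<circ> \<sigma>) (pad_vertex m v \<circ> inv \<sigma> \<circ> \<sigma>)"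
    unfolding vertex_cost_def by (rule matching_cost_reindex_image[OF permutes_imp_bij[OF \<sigma>] JN])
  also have "\<dots> = vertex_cost N m v n w \<sigma> J"
    using inv_\<sigma> by (simp add: vertex_cost_def comp_assoc matching_cost_swap[OF vertex_dist_commute])
  finally have vertices: "vertex_cost N n w m v (inv \<sigma>) (\<sigma> ` J) = vertex_cost N m v n w \<sigma> J" .
  have "edge_cost N n f m e (inv \<sigma>) (\<sigma> ` J)
      = matching_cost p dY y0 ({1..N} \<times> {1..N}) (J \<times> J) (pad_edge y0 n f \<circ> map_prod \<sigma> \<sigma>)
          (pad_edge y0 m e \<circ> map_prod (inv \<sigma>) (inv \<sigma>) \<circ> map_prod \<sigma> \<sigma>)"
    using matching_cost_reindex_image[OF bij_betw_map_prod_permutes[OF \<sigma>] Sigma_mono[OF JN JN]]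
    by (simp add: edge_cost_def map_prod_surj_on)
  also have "\<dots> = edge_cost N m e n f \<sigma> J"
    using inv_\<sigma> by (simp add: edge_cost_def comp_assoc matching_cost_swap[OF dY_commute])
  finally show "padded_cost N (n, w, f) (m, v, e) (inv \<sigma>) (\<sigma> ` J) = padded_cost N (m, v, e) (n, w, f) \<sigma> J"
    using vertices by simp
qed

lemma padded_costs_commute:
  assumes "fst G \<le> N" "fst H \<le> N"
  shows "padded_costs N G H = padded_costs N H G"
proof -
  have "padded_costs N G H \<subseteq> padded_costs N H G" if "fst G \<le> N" for G H
  proof
    fix c assume "c \<in> padded_costs N G H"
    then obtain \<sigma> J where match: "padded_matching N (fst G) (fst H) \<sigma> J"
      and c: "c = padded_cost N G H \<sigma> J"
      unfolding padded_costs_def by blast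
    obtain m v e n w f where G: "G = (m, v, e)" and H: "H = (n, w, f)"
      by (cases G, cases H) auto
    have "padded_matching N (fst H) (fst G) (inv \<sigma>) (\<sigma> ` J)"
      "c = padded_cost N H G (inv \<sigma>) (\<sigma> ` J)"
      using padded_cost_swap[of N m n \<sigma> J] match c that by (simp_all add: G H)
    then show "c \<in> padded_costs N H G"
      unfolding padded_costs_def by blast
  qed
  then show ?thesis
    using assms by blast
qed

lemma finite_padded_costs: "finite (padded_costs N G H)"
proof -
  have "padded_costs N G H
      \<subseteq> (\<lambda>(\<sigma>, J). padded_cost N G H \<sigma> J) ` ({\<sigma>. \<sigma> permutes {1..N}} \<times> Pow {1..fst G})"
    unfolding padded_costs_def padded_matching_def by auto
  then show ?thesis
    by (rule finite_subset) (simp add: finite_permutations)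
qed

lemma padded_costs_nonempty: "padded_costs N G H \<noteq> {}"
  unfolding padded_costs_def padded_matching_def by (auto intro: permutes_id)

lemma padded_cost_nonneg: "0 \<le> padded_cost N G H \<sigma> J"
  by (cases G, cases H) (simp add: vertex_cost_def edge_cost_def matching_cost_nonneg)

lemma padded_costs_nonneg: "c \<in> padded_costs N G H \<Longrightarrow> 0 \<le> c"
  unfolding padded_costs_def using padded_cost_nonneg by blast

lemma Min_padded_costs_nonneg: "0 \<le> Min (padded_costs N G H)"
  using Min_in[OF finite_padded_costs padded_costs_nonempty] padded_costs_nonneg by blast

lemma padded_costs_eq_gtt_costs:
  assumes "m \<le> n" "n \<le> N"
  shows "{gtt_cost p C dX dY y0 (m, v, e) (n, w, f) I \<pi> | I \<pi>.
            I \<subseteq> {1..fst (m, v, e)} \<and> \<pi> permutes {1..fst (n, w, f)}}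
         = padded_costs N (m, v, e) (n, w, f)"
proof (intro equalityI subsetI)
  fix c assume "c \<in> {gtt_cost p C dX dY y0 (m, v, e) (n, w, f) I \<pi> | I \<pi>.
                      I \<subseteq> {1..fst (m, v, e)} \<and> \<pi> permutes {1..fst (n, w, f)}}"
  then obtain I \<pi> where c: "c = gtt_cost p C dX dY y0 (m, v, e) (n, w, f) I \<pi>"
    and I: "I \<subseteq> {1..m}" and \<pi>: "\<pi> permutes {1..n}"
    by auto
  have "padded_matching N m n \<pi> I"
    using I \<pi> assms permutes_subset[OF \<pi>] permutes_in_image[OF \<pi>]
    by (auto simp: padded_matching_def)
  moreover have "padded_cost N (m, v, e) (n, w, f) \<pi> I = c"
    using padded_cost_eq_gtt_cost[OF \<open>padded_matching N m n \<pi> I\<close>] assms c by simp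
  ultimately show "c \<in> padded_costs N (m, v, e) (n, w, f)"
    unfolding padded_costs_def by force
next
  fix c assume "c \<in> padded_costs N (m, v, e) (n, w, f)"
  then obtain \<sigma> J where match: "padded_matching N m n \<sigma> J"
    and c: "c = padded_cost N (m, v, e) (n, w, f) \<sigma> J"
    unfolding padded_costs_def by auto
  then have "J \<subseteq> {1..n}" "inj_on \<sigma> J" "\<sigma> ` J \<subseteq> {1..n}"
    using assms permutes_inj_on by (auto simp: padded_matching_def)
  then obtain \<pi> where "\<pi> permutes {1..n}" "\<And>i. i \<in> J \<Longrightarrow> \<pi> i = \<sigma> i"
    using permutes_extend[of "{1..n}" J \<sigma>] by blast
  moreover have "J \<subseteq> {1..m}"
    using match by (simp add: padded_matching_def)
  ultimately show "c \<in> {gtt_cost p C dX dY y0 (m, v, e) (n, w, f) I \<pi> | I \<pi>.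
                          I \<subseteq> {1..fst (m, v, e)} \<and> \<pi> permutes {1..fst (n, w, f)}}"
    using padded_cost_eq_gtt_cost[OF match] assms c by fastforce
qed

lemma gtt_dist_eq_Min_padded_costs:
  assumes "fst G \<le> N" "fst H \<le> N"
  shows "gtt_dist p C dX dY y0 G H = Min (padded_costs N G H) powr (1/p)"
proof -
  obtain m v e n w f where G: "G = (m, v, e)" and H: "H = (n, w, f)"
    by (cases G, cases H) auto
  show ?thesis
  proof (cases "m \<le> n")
    case True
    then show ?thesis
      using padded_costs_eq_gtt_costs[of m n N v e w f] assms
      by (simp add: gtt_dist_def gtt_dist_le_def G H)
  next
    case False
    then show ?thesis
      using padded_costs_eq_gtt_costs[of n m N w f v e] assms padded_costs_commute[OF assms]
      by (simp add: gtt_dist_def gtt_dist_le_def G H)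
  qed
qed

lemma padded_cost_relabel:
  assumes \<rho>: "\<rho> permutes {1..N}" and "J \<subseteq> {1..N}"
    and "pad_vertex m v = pad_vertex m' v' \<circ> \<rho>" "pad_edge y0 m e = pad_edge y0 m' e' \<circ> map_prod \<rho> \<rho>"
  shows "padded_cost N (m, v, e) H (\<sigma> \<circ> \<rho>) J = padded_cost N (m', v', e') H \<sigma> (\<rho> ` J)"
proof -
  obtain n w f where H: "H = (n, w, f)"
    by (cases H) auto
  have "vertex_cost N m' v' n w \<sigma> (\<rho> ` J) = vertex_cost N m v n w (\<sigma> \<circ> \<rho>) J"
    unfolding vertex_cost_def matching_cost_reindex_image[OF permutes_imp_bij[OF \<rho>] \<open>J \<subseteq> {1..N}\<close>]
    by (simp add: assms(3) comp_assoc)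
  moreover have "edge_cost N m' e' n f \<sigma> (\<rho> ` J) = edge_cost N m e n f (\<sigma> \<circ> \<rho>) J"
    using matching_cost_reindex_image[OF bij_betw_map_prod_permutes[OF \<rho>] Sigma_mono[OF assms(2) assms(2)],
        of p dY y0 "pad_edge y0 m' e'" "pad_edge y0 n f \<circ> map_prod \<sigma> \<sigma>"]
    by (simp add: edge_cost_def assms(4) comp_assoc map_prod.comp map_prod_surj_on)
  ultimately show ?thesis
    by (simp add: H)
qed

lemma padded_costs_graph_eq:
  assumes "graph_eq G G'" "fst G \<le> N"
  shows "padded_costs N G H = padded_costs N G' H"
proof -
  obtain m v e m' v' e' where G: "G = (m, v, e)" and G': "G' = (m', v', e')"
    by (cases G, cases G') auto
  obtain \<rho> where "m = m'" and \<rho>m: "\<rho> permutes {1..m}"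
    and pad: "pad_vertex m v = pad_vertex m' v' \<circ> \<rho>" "pad_edge y0 m e = pad_edge y0 m' e' \<circ> map_prod \<rho> \<rho>"
    using graph_eq_padE[of m v e m' v' e'] assms(1) G G' by blast
  have \<rho>: "\<rho> permutes {1..N}"
    using permutes_subset[OF \<rho>m] assms(2) G by auto
  have inv_\<rho>: "\<rho> \<circ> inv \<rho> = id" "inv \<rho> \<circ> \<rho> = id" "\<rho> ` inv \<rho> ` J = J" for J
    using permutes_inv_o[OF \<rho>] by (auto simp: image_comp)
  show ?thesis
  proof (intro equalityI subsetI)
    fix c assume "c \<in> padded_costs N G H"
    then obtain \<sigma> J where match: "padded_matching N m (fst H) \<sigma> J" and c: "c = padded_cost N G H \<sigma> J"
      unfolding padded_costs_def G by auto
    have "padded_matching N m' (fst H) (\<sigma> \<circ> inv \<rho>) (\<rho> ` J)"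
      using match permutes_inv[OF \<rho>] permutes_in_image[OF \<rho>m] \<open>m = m'\<close>
      by (auto simp: padded_matching_def permutes_compose permutes_inverses[OF \<rho>])
    moreover have "J \<subseteq> {1..N}"
      using match assms(2) G by (auto simp: padded_matching_def)
    then have "c = padded_cost N G' H (\<sigma> \<circ> inv \<rho>) (\<rho> ` J)"
      using padded_cost_relabel[OF \<rho> _ pad, of J H "\<sigma> \<circ> inv \<rho>"] c inv_\<rho>
      by (simp add: G G' comp_assoc)
    ultimately show "c \<in> padded_costs N G' H"
      unfolding padded_costs_def G' by auto
  next
    fix c assume "c \<in> padded_costs N G' H"
    then obtain \<sigma> J where match: "padded_matching N m' (fst H) \<sigma> J" and c: "c = padded_cost N G' H \<sigma> J"
      unfolding padded_costs_def G' by auto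
    have "inv \<rho> ` J \<subseteq> {1..m}"
      using match \<open>m = m'\<close> permutes_image[OF permutes_inv[OF \<rho>m]]
      by (auto simp: padded_matching_def)
    then have "padded_matching N m (fst H) (\<sigma> \<circ> \<rho>) (inv \<rho> ` J)"
      using match \<rho> by (auto simp: padded_matching_def permutes_compose permutes_inverses[OF \<rho>])
    moreover have "c = padded_cost N G H (\<sigma> \<circ> \<rho>) (inv \<rho> ` J)"
      using padded_cost_relabel[OF \<rho> _ pad, of "inv \<rho> ` J" H \<sigma>] \<open>inv \<rho> ` J \<subseteq> {1..m}\<close> c assms(2) inv_\<rho>
      by (simp add: G G' subset_trans[of _ "{1..m}"])
    ultimately show "c \<in> padded_costs N G H"
      unfolding padded_costs_def G by auto
  qed
qed

lemma padded_cost_self_eq_0: "padded_cost N (m, v, e) (m, v, e) id {1..m} = 0"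
proof -
  have "0 < p"
    using p_ge_1 by simp
  then have "vertex_cost N m v m v id {1..m} = 0" "edge_cost N m e m e id {1..m} = 0"
    unfolding vertex_cost_def edge_cost_def map_prod.id
    by (auto intro!: matching_cost_self_eq_0 simp: vertex_dist_self dY_refl pad_vertex_def split: if_splits)
  then show ?thesis
    by simp
qed

lemma padded_matching_compose:
  assumes "padded_matching N m n \<sigma>\<^sub>1 J\<^sub>1" "padded_matching N n k \<sigma>\<^sub>2 J\<^sub>2"
  shows "padded_matching N m k (\<sigma>\<^sub>2 \<circ> \<sigma>\<^sub>1) {i \<in> J\<^sub>1. \<sigma>\<^sub>1 i \<in> J\<^sub>2}"
  using assms by (auto simp: padded_matching_def permutes_compose)

lemma vertex_cost_root_triangle:
  assumes match\<^sub>1: "padded_matching N m n \<sigma>\<^sub>1 J\<^sub>1" and match\<^sub>2: "padded_matching N n k \<sigma>\<^sub>2 J\<^sub>2" and "m \<le> N"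
  shows "vertex_cost N m v k u (\<sigma>\<^sub>2 \<circ> \<sigma>\<^sub>1) {i \<in> J\<^sub>1. \<sigma>\<^sub>1 i \<in> J\<^sub>2} powr (1/p)
           \<le> vertex_cost N m v n w \<sigma>\<^sub>1 J\<^sub>1 powr (1/p) + vertex_cost N n w k u \<sigma>\<^sub>2 J\<^sub>2 powr (1/p)"
proof -
  define J\<^sub>2' where "J\<^sub>2' = {i \<in> {1..N}. \<sigma>\<^sub>1 i \<in> J\<^sub>2}"
  have J: "{i \<in> J\<^sub>1. \<sigma>\<^sub>1 i \<in> J\<^sub>2} = J\<^sub>1 \<inter> J\<^sub>2'"
    using match\<^sub>1 \<open>m \<le> N\<close> by (auto simp: J\<^sub>2'_def padded_matching_def)
  have reindexed: "vertex_cost N n w k u \<sigma>\<^sub>2 J\<^sub>2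
      = matching_cost p (option_dist C dX) None {1..N} J\<^sub>2' (pad_vertex n w \<circ> \<sigma>\<^sub>1) (pad_vertex k u \<circ> (\<sigma>\<^sub>2 \<circ> \<sigma>\<^sub>1))"
    using match\<^sub>1 unfolding vertex_cost_def J\<^sub>2'_def comp_assoc[symmetric] padded_matching_def
    by (intro matching_cost_reindex permutes_imp_bij) simp
  show ?thesis
    unfolding reindexed unfolding vertex_cost_def J
  proof (intro matching_cost_root_triangle)
    fix i assume "i \<in> {1..N}" "i \<in> J\<^sub>1" "i \<in> J\<^sub>2'"
    \<comment> \<open>the middle vertex is matched, hence a genuine vertex of the middle graph\<close>
    then have "pad_vertex n w (\<sigma>\<^sub>1 i) \<noteq> None"
      using match\<^sub>2 by (auto simp: J\<^sub>2'_def pad_vertex_def padded_matching_def)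
    then show "option_dist C dX (pad_vertex m v i) ((pad_vertex k u \<circ> (\<sigma>\<^sub>2 \<circ> \<sigma>\<^sub>1)) i)
      \<le> option_dist C dX (pad_vertex m v i) ((pad_vertex n w \<circ> \<sigma>\<^sub>1) i)
        + option_dist C dX ((pad_vertex n w \<circ> \<sigma>\<^sub>1) i) ((pad_vertex k u \<circ> (\<sigma>\<^sub>2 \<circ> \<sigma>\<^sub>1)) i)"
      by (simp add: vertex_dist_triangle)
  qed (use p_ge_1 in \<open>auto simp: vertex_dist_nonneg vertex_dist_triangle_None\<close>)
qed

lemma edge_cost_root_triangle:
  assumes match\<^sub>1: "padded_matching N m n \<sigma>\<^sub>1 J\<^sub>1" and "m \<le> N"
  shows "edge_cost N m e k g (\<sigma>\<^sub>2 \<circ> \<sigma>\<^sub>1) {i \<in> J\<^sub>1. \<sigma>\<^sub>1 i \<in> J\<^sub>2} powr (1/p)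
           \<le> edge_cost N m e n f \<sigma>\<^sub>1 J\<^sub>1 powr (1/p) + edge_cost N n f k g \<sigma>\<^sub>2 J\<^sub>2 powr (1/p)"
proof -
  define J\<^sub>2' where "J\<^sub>2' = {i \<in> {1..N}. \<sigma>\<^sub>1 i \<in> J\<^sub>2}"
  have J: "{i \<in> J\<^sub>1. \<sigma>\<^sub>1 i \<in> J\<^sub>2} = J\<^sub>1 \<inter> J\<^sub>2'"
    using match\<^sub>1 \<open>m \<le> N\<close> by (auto simp: J\<^sub>2'_def padded_matching_def)
  have \<sigma>\<^sub>1: "\<sigma>\<^sub>1 permutes {1..N}"
    using match\<^sub>1 by (simp add: padded_matching_def)
  have "{q \<in> {1..N} \<times> {1..N}. map_prod \<sigma>\<^sub>1 \<sigma>\<^sub>1 q \<in> J\<^sub>2 \<times> J\<^sub>2} = J\<^sub>2' \<times> J\<^sub>2'"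
    by (auto simp: J\<^sub>2'_def)
  then have reindexed: "edge_cost N n f k g \<sigma>\<^sub>2 J\<^sub>2
      = matching_cost p dY y0 ({1..N} \<times> {1..N}) (J\<^sub>2' \<times> J\<^sub>2') (pad_edge y0 n f \<circ> map_prod \<sigma>\<^sub>1 \<sigma>\<^sub>1)
          (pad_edge y0 k g \<circ> map_prod (\<sigma>\<^sub>2 \<circ> \<sigma>\<^sub>1) (\<sigma>\<^sub>2 \<circ> \<sigma>\<^sub>1))"
    using matching_cost_reindex[OF bij_betw_map_prod_permutes[OF \<sigma>\<^sub>1],
        of p dY y0 "J\<^sub>2 \<times> J\<^sub>2" "pad_edge y0 n f" "pad_edge y0 k g \<circ> map_prod \<sigma>\<^sub>2 \<sigma>\<^sub>2"]
    by (simp add: edge_cost_def comp_assoc map_prod.comp)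
  show ?thesis
    unfolding reindexed unfolding edge_cost_def J Times_Int_Times[symmetric]
    using p_ge_1 dY_nonneg dY_triangle by (intro matching_cost_root_triangle) auto
qed

lemma padded_cost_root_triangle:
  assumes "padded_matching N m n \<sigma>\<^sub>1 J\<^sub>1" "padded_matching N n k \<sigma>\<^sub>2 J\<^sub>2" "m \<le> N"
  shows "padded_cost N (m, v, e) (k, u, g) (\<sigma>\<^sub>2 \<circ> \<sigma>\<^sub>1) {i \<in> J\<^sub>1. \<sigma>\<^sub>1 i \<in> J\<^sub>2} powr (1/p)
           \<le> padded_cost N (m, v, e) (n, w, f) \<sigma>\<^sub>1 J\<^sub>1 powr (1/p) + padded_cost N (n, w, f) (k, u, g) \<sigma>\<^sub>2 J\<^sub>2 powr (1/p)"
proof -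
  have "(1/2 * edge_cost N m e k g (\<sigma>\<^sub>2 \<circ> \<sigma>\<^sub>1) {i \<in> J\<^sub>1. \<sigma>\<^sub>1 i \<in> J\<^sub>2}) powr (1/p)
      \<le> (1/2 * edge_cost N m e n f \<sigma>\<^sub>1 J\<^sub>1) powr (1/p) + (1/2 * edge_cost N n f k g \<sigma>\<^sub>2 J\<^sub>2) powr (1/p)"
    using p_ge_1 edge_cost_root_triangle[OF assms(1,3)]
    by (intro root_triangle_scale) (auto simp: edge_cost_def matching_cost_nonneg)
  then show ?thesis
    using p_ge_1 vertex_cost_root_triangle[OF assms]
    by (simp, intro root_add_triangle) (auto simp: vertex_cost_def edge_cost_def matching_cost_nonneg)
qed

lemma vertex_cost_eq_0_imp:
  assumes zero: "vertex_cost N m v n w \<sigma> J = 0" and match: "padded_matching N m n \<sigma> J"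
    and "m \<le> N" "n \<le> N"
  shows "J = {1..m}" "\<sigma> ` {1..m} = {1..n}" "\<And>i. i \<in> J \<Longrightarrow> dX (v i) (w (\<sigma> i)) = 0"
proof -
  have \<sigma>: "\<sigma> permutes {1..N}" and J: "J \<subseteq> {1..m}" "\<sigma> ` J \<subseteq> {1..n}"
    using match by (auto simp: padded_matching_def)
  have vertex: "if i \<in> J then option_dist C dX (pad_vertex m v i) (pad_vertex n w (\<sigma> i)) = 0
      else option_dist C dX (pad_vertex m v i) None = 0 \<and> option_dist C dX None (pad_vertex n w (\<sigma> i)) = 0"
    if "i \<in> {1..N}" for i
    using matching_cost_eq_0_imp[OF zero[unfolded vertex_cost_def] _ that] unfolding o_def by blast
  show J_eq: "J = {1..m}"
  proof (rule ccontr)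
    assume "J \<noteq> {1..m}"
    then obtain i where "i \<in> {1..m}" "i \<notin> J"
      using J by blast
    then show False
      using vertex[of i] C_pos \<open>m \<le> N\<close> by (simp add: pad_vertex_def)
  qed
  show "\<sigma> ` {1..m} = {1..n}"
  proof
    show "\<sigma> ` {1..m} \<subseteq> {1..n}"
      using J J_eq by simp
    show "{1..n} \<subseteq> \<sigma> ` {1..m}"
    proof
      fix j assume j: "j \<in> {1..n}"
      have "inv \<sigma> j \<in> {1..N}"
        using j \<open>n \<le> N\<close> permutes_in_image[OF permutes_inv[OF \<sigma>]] by auto
      moreover have "\<sigma> (inv \<sigma> j) = j"
        using permutes_inverses[OF \<sigma>] by simp
      ultimately have "inv \<sigma> j \<in> {1..m}"
        using vertex[of "inv \<sigma> j"] j C_pos J_eq by (auto simp: pad_vertex_def split: if_splits)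
      then show "j \<in> \<sigma> ` {1..m}"
        using \<open>\<sigma> (inv \<sigma> j) = j\<close> by force
    qed
  qed
  show "dX (v i) (w (\<sigma> i)) = 0" if "i \<in> J" for i
  proof -
    have "i \<in> {1..m}" "\<sigma> i \<in> {1..n}"
      using that J by auto
    then show ?thesis
      using vertex[of i] that \<open>m \<le> N\<close> by (simp add: pad_vertex_def)
  qed
qed

lemma graph_eq_if_padded_cost_eq_0:
  assumes "is_metric dX" "is_metric dY" and match: "padded_matching N m n \<sigma> J" and "m \<le> N" "n \<le> N"
    and zero: "padded_cost N (m, v, e) (n, w, f) \<sigma> J = 0"
  shows "graph_eq (m, v, e) (n, w, f)"
proof -
  have "0 \<le> vertex_cost N m v n w \<sigma> J" "0 \<le> edge_cost N m e n f \<sigma> J"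
    unfolding vertex_cost_def edge_cost_def by (rule matching_cost_nonneg)+
  then have "vertex_cost N m v n w \<sigma> J = 0" and edges: "edge_cost N m e n f \<sigma> J = 0"
    using zero by simp_all
  note vertices = vertex_cost_eq_0_imp[OF this(1) match \<open>m \<le> N\<close> \<open>n \<le> N\<close>]
  have \<sigma>: "\<sigma> permutes {1..N}"
    using match by (simp add: padded_matching_def)
  have "inj_on \<sigma> {1..m}"
    using permutes_inj[OF \<sigma>] inj_on_subset by blast
  then have "m = n"
    using card_image vertices(2) by fastforce
  obtain \<pi> where \<pi>: "\<pi> permutes {1..n}" and \<pi>_eq: "\<And>i. i \<in> {1..n} \<Longrightarrow> \<pi> i = \<sigma> i"
    using permutes_extend[of "{1..n}" "{1..n}" \<sigma>] vertices(2) \<open>m = n\<close> permutes_inj_on[OF \<sigma>] by blast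
  have "v i = w (\<pi> i)" if "i \<in> {1..n}" for i
    using vertices(1) vertices(3)[of i] that \<open>m = n\<close> \<open>is_metric dX\<close> \<pi>_eq by (auto simp: is_metric_def)
  moreover have "e i i' = f (\<pi> i) (\<pi> i')" if "i \<in> {1..n}" "i' \<in> {1..n}" for i i'
  proof -
    have "\<sigma> i \<in> {1..n}" "\<sigma> i' \<in> {1..n}"
      using vertices(2) that \<open>m = n\<close> by blast+
    then show ?thesis
      using matching_cost_eq_0_imp[OF edges[unfolded edge_cost_def], of "(i, i')"] that vertices(1)
        \<open>m = n\<close> \<open>n \<le> N\<close> \<open>is_metric dY\<close> \<pi>_eq
      by (auto simp: is_metric_def)
  qed
  ultimately show ?thesis
    using \<pi> \<open>m = n\<close> by (auto simp: graph_eq_def)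
qed

lemma gtt_dist_commute: "gtt_dist p C dX dY y0 G H = gtt_dist p C dX dY y0 H G"
  using gtt_dist_eq_Min_padded_costs[of G "fst G + fst H" H] gtt_dist_eq_Min_padded_costs[of H "fst G + fst H" G]
    padded_costs_commute[of G "fst G + fst H" H]
  by simp

lemma gtt_dist_graph_eq_cong:
  assumes "graph_eq G G'"
  shows "gtt_dist p C dX dY y0 G H = gtt_dist p C dX dY y0 G' H"
  using gtt_dist_eq_Min_padded_costs[of G "fst G + fst H" H] gtt_dist_eq_Min_padded_costs[of G' "fst G + fst H" H]
    padded_costs_graph_eq[OF assms, of "fst G + fst H" H] graph_eq_imp_fst_eq[OF assms]
  by simp

lemma gtt_dist_self: "gtt_dist p C dX dY y0 G G = 0"
proof -
  obtain m v e where G: "G = (m, v, e)"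
    by (cases G) auto
  have "padded_matching m m m id {1..m}"
    by (simp add: padded_matching_def permutes_id)
  then have "0 \<in> padded_costs m G G"
    using padded_cost_self_eq_0[of m m v e] unfolding padded_costs_def G by force
  then have "Min (padded_costs m G G) = 0"
    using finite_padded_costs padded_costs_nonneg by (intro Min_eqI) auto
  then show ?thesis
    using gtt_dist_eq_Min_padded_costs[of G m G] G by simp
qed

lemma gtt_dist_triangle:
  "gtt_dist p C dX dY y0 G K \<le> gtt_dist p C dX dY y0 G H + gtt_dist p C dX dY y0 H K"
proof -
  obtain m v e n w f k u g where G: "G = (m, v, e)" and H: "H = (n, w, f)" and K: "K = (k, u, g)"
    by (cases G, cases H, cases K) auto
  define N where "N = m + n + k"
  have N: "m \<le> N" "n \<le> N" "k \<le> N"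
    by (auto simp: N_def)
  obtain \<sigma>\<^sub>1 J\<^sub>1 where match\<^sub>1: "padded_matching N m n \<sigma>\<^sub>1 J\<^sub>1"
    and min\<^sub>1: "padded_cost N G H \<sigma>\<^sub>1 J\<^sub>1 = Min (padded_costs N G H)"
    using Min_in[OF finite_padded_costs padded_costs_nonempty, of N G H]
    unfolding padded_costs_def G H by auto
  obtain \<sigma>\<^sub>2 J\<^sub>2 where match\<^sub>2: "padded_matching N n k \<sigma>\<^sub>2 J\<^sub>2"
    and min\<^sub>2: "padded_cost N H K \<sigma>\<^sub>2 J\<^sub>2 = Min (padded_costs N H K)"
    using Min_in[OF finite_padded_costs padded_costs_nonempty, of N H K]
    unfolding padded_costs_def H K by auto
  let ?\<sigma> = "\<sigma>\<^sub>2 \<circ> \<sigma>\<^sub>1" and ?J = "{i \<in> J\<^sub>1. \<sigma>\<^sub>1 i \<in> J\<^sub>2}"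
  have "padded_cost N G K ?\<sigma> ?J \<in> padded_costs N G K"
    using padded_matching_compose[OF match\<^sub>1 match\<^sub>2]
    unfolding padded_costs_def G K by auto
  then have "Min (padded_costs N G K) powr (1/p) \<le> padded_cost N G K ?\<sigma> ?J powr (1/p)"
    using finite_padded_costs Min_padded_costs_nonneg p_ge_1 by (intro powr_mono2) auto
  also have "\<dots> \<le> padded_cost N G H \<sigma>\<^sub>1 J\<^sub>1 powr (1/p) + padded_cost N H K \<sigma>\<^sub>2 J\<^sub>2 powr (1/p)"
    using padded_cost_root_triangle[OF match\<^sub>1 match\<^sub>2 N(1)] by (simp add: G H K)
  finally show ?thesis
    using gtt_dist_eq_Min_padded_costs N min\<^sub>1 min\<^sub>2 by (simp add: G H K)
qed

lemma gtt_dist_eq_0_iff: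
  assumes "is_metric dX" "is_metric dY"
  shows "gtt_dist p C dX dY y0 G H = 0 \<longleftrightarrow> graph_eq G H"
proof
  assume "gtt_dist p C dX dY y0 G H = 0"
  obtain m v e n w f where G: "G = (m, v, e)" and H: "H = (n, w, f)"
    by (cases G, cases H) auto
  define N where "N = m + n"
  have N: "m \<le> N" "n \<le> N"
    by (auto simp: N_def)
  have "Min (padded_costs N G H) = 0"
    using \<open>gtt_dist p C dX dY y0 G H = 0\<close> gtt_dist_eq_Min_padded_costs[of G N H] Min_padded_costs_nonneg N
    by (simp add: G H)
  then obtain \<sigma> J where "padded_matching N m n \<sigma> J" "padded_cost N G H \<sigma> J = 0"
    using Min_in[OF finite_padded_costs padded_costs_nonempty, of N G H]
    unfolding padded_costs_def G H by auto
  then show "graph_eq G H"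
    using graph_eq_if_padded_cost_eq_0[OF assms] N by (simp add: G H)
next
  assume "graph_eq G H"
  then show "gtt_dist p C dX dY y0 G H = 0"
    using gtt_dist_graph_eq_cong[of G H H] gtt_dist_self[of H] by simp
qed

end

theorem mainTheorem2:
  fixes p C :: real and dX :: "'x \<Rightarrow> 'x \<Rightarrow> real" and dY :: "'y \<Rightarrow> 'y \<Rightarrow> real" and y0 :: 'y
  assumes "p \<ge> 1" and "C > 0" and "pseudometric dX" and "pseudometric dY"
  shows "(\<forall>G G' H. is_agraph y0 G \<and> is_agraph y0 G' \<and> is_agraph y0 H \<and> graph_eq G G' \<longrightarrow>
            gtt_dist p C dX dY y0 G H = gtt_dist p C dX dY y0 G' H \<and>
            gtt_dist p C dX dY y0 H G = gtt_dist p C dX dY y0 H G')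
       \<and> (\<forall>G. is_agraph y0 G \<longrightarrow> gtt_dist p C dX dY y0 G G = 0)
       \<and> (\<forall>G H. is_agraph y0 G \<and> is_agraph y0 H \<longrightarrow>
            gtt_dist p C dX dY y0 G H = gtt_dist p C dX dY y0 H G)
       \<and> (\<forall>G H K. is_agraph y0 G \<and> is_agraph y0 H \<and> is_agraph y0 K \<longrightarrow>
            gtt_dist p C dX dY y0 G K \<le> gtt_dist p C dX dY y0 G H + gtt_dist p C dX dY y0 H K)
       \<and> (is_metric dX \<and> is_metric dY \<longrightarrow>
            (\<forall>G H. is_agraph y0 G \<and> is_agraph y0 H \<longrightarrow>
               (gtt_dist p C dX dY y0 G H = 0 \<longleftrightarrow> graph_eq G H)))"
proof -
  interpret gtt_space p C dX dY y0
    using assms by unfold_locales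
  have "gtt_dist p C dX dY y0 H G = gtt_dist p C dX dY y0 H G'" if "graph_eq G G'" for G G' H
    using gtt_dist_graph_eq_cong[OF that] gtt_dist_commute by metis
  then show ?thesis
    using gtt_dist_graph_eq_cong gtt_dist_self gtt_dist_commute gtt_dist_triangle gtt_dist_eq_0_iff
    by blast
qed

end
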